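(* Let $\mathcal X,\mathcal Y,\mathcal T$ be Polish spaces, let $F:\mathcal X\times\mathcal T\to\mathbb R$ be measurable, and let $(X,Y)$ be an $\mathcal X\times\mathcal Y$-valued random variable on a probability space $(\Omega,\mathcal F,\mathbb P)$. For $t\in\mathcal T$, $\epsilon>0$ let $B(t,\epsilon)$ be the open ball of radius $\epsilon$ around $t$ in $\mathcal T$. Assume $F(X,t)$ is integrable for all $t\in\mathcal T$ and: (1) for all $t\in\mathcal T$, $\|\mathbb E[F(X,t)\mid Y]-\mathbb E[F(X,t)]\|_{L_\infty(\mathbb P)}\le C<\infty$; (2) for every $x\in\mathcal X$ the map $t\mapsto F(x,t)$ is continuous; (3) there is $\epsilon>0$ and, for every $t\in\mathcal T$, a measurable $L_t:\mathcal X\to\mathbb R_+$ with $\sup_{t'\in B(t,\epsilon)}|F(x,t')|\le L_t(x)$ for all $x\in\mathcal X$ and $L_t(X)$ integrable. Then there is a version of the conditional expectations $\mathbb E[F(X,t)\mid Y]$ such that for $\mathbb P$-almost all $y\in\mathcal Y$ one has, simultaneously for all $t\in\mathcal T$, $|\mathbb E[F(X,t)\mid Y=y]-\mathbb E[F(X,t)]|\le C$. In particular, if $\mathcal T=\mathcal Y$, then $\|\mathbb E[F(X,Y)\mid Y]-\mathbb E[F(\tilde X,Y)\mid Y]\|_{L_\infty(\mathbb P)}\le C$, where $\tilde X$ is a copy of $X$ (same distribution) independent of $Y$.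
   Context: All spaces carry their Borel $\sigma$-algebras. $\|\cdot\|_{L_\infty(\mathbb P)}$ is the essential supremum norm. *)

theory Defs
  imports "HOL-Probability.Probability"
begin

end

theory Submission
  imports Defs
begin

(*
  For a fixed parameter t the deviation bound holds almost surely, so clamping any version of
  E[F(X,t) | Y] to the interval [E F(X,t) - C, E F(X,t) + C] yields a version obeying it everywhere,
  simultaneously for all t.

  For an independent copy X' of X and a random parameter h(Y), independence gives
  E[F(X',t); Y \<in> B] = P(Y \<in> B) E F(X,t), hence |E[F(X,t) - F(X',t); Y \<in> B]| \<le> C P(Y \<in> B)
  for every constant t. Summing over a countable partition extends this to parameters with countably
  many values, and continuity in t together with the local domination carries it, by dominated
  convergence, to h(Y) on events where h(Y) stays in a ball of radius \<epsilon>/2. Countably many such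
  balls cover the parameter space, and a \<sigma>(Y)-measurable function whose integral over every small
  enough event is at most C times its probability is bounded by C almost surely.
*)

lemma borel_measurable_vimage_algebra_factor:
  fixes Z :: "'w \<Rightarrow> real"
  assumes Y: "Y \<in> M \<rightarrow>\<^sub>M N"
    and Z: "Z \<in> borel_measurable (vimage_algebra (space M) Y N)"
  obtains g where "g \<in> borel_measurable N" "\<And>\<omega>. \<omega> \<in> space M \<Longrightarrow> g (Y \<omega>) = Z \<omega>"
proof -
  have Y_space: "Y \<in> space M \<rightarrow> space N" using measurable_space[OF Y] by auto
  have "\<exists>A\<in>sets N. {\<omega>\<in>space M. Z \<omega> < q} = Y -` A \<inter> space M" for q :: real
  proof -
    have "{\<omega>\<in>space (vimage_algebra (space M) Y N). Z \<omega> < q} \<in> sets (vimage_algebra (space M) Y N)"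
      using Z by measurable
    then show ?thesis
      unfolding sets_vimage_algebra2[OF Y_space] by auto
  qed
  then obtain A where A: "\<And>q. A q \<in> sets N" "\<And>q. {\<omega>\<in>space M. Z \<omega> < q} = Y -` A q \<inter> space M"
    by metis
  \<comment> \<open>\<open>Z \<omega>\<close> is recovered from \<open>Y \<omega>\<close> as the infimum of the rationals \<open>q\<close> with \<open>Y \<omega> \<in> A q\<close>.\<close>
  define g where "g y = real_of_ereal (INF q\<in>\<rat>. if y \<in> A q then ereal q else \<infinity>)" for y
  have "g \<in> borel_measurable N"
    unfolding g_def using A(1) countable_rat by measurable
  moreover have "g (Y \<omega>) = Z \<omega>" if \<omega>: "\<omega> \<in> space M" for \<omega>
  proof -
    have mem: "Y \<omega> \<in> A q \<longleftrightarrow> Z \<omega> < q" for q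
      using A(2)[of q] \<omega> by blast
    have "(INF q\<in>\<rat>. if Y \<omega> \<in> A q then ereal q else \<infinity>) = ereal (Z \<omega>)"
    proof (rule antisym)
      show "ereal (Z \<omega>) \<le> (INF q\<in>\<rat>. if Y \<omega> \<in> A q then ereal q else \<infinity>)"
        by (rule INF_greatest) (auto simp: mem)
      show "(INF q\<in>\<rat>. if Y \<omega> \<in> A q then ereal q else \<infinity>) \<le> ereal (Z \<omega>)"
      proof (rule dense_ge)
        fix b assume b: "ereal (Z \<omega>) < b"
        obtain q where q: "q \<in> \<rat>" "Z \<omega> < q" "ereal q < b"
        proof (cases b)
          case (real r)
          with b obtain q where "q \<in> \<rat>" "Z \<omega> < q" "q < r"
            using Rats_dense_in_real by force
          then show ?thesis using that real by auto
        next
          case PInf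
          obtain q where "q \<in> \<rat>" "Z \<omega> < q" "q < Z \<omega> + 1"
            using Rats_dense_in_real[of "Z \<omega>" "Z \<omega> + 1"] by auto
          then show ?thesis using that PInf by auto
        qed (use b in auto)
        then have "(INF q\<in>\<rat>. if Y \<omega> \<in> A q then ereal q else \<infinity>) \<le> ereal q"
          by (intro INF_lower2[of q]) (auto simp: mem)
        then show "(INF q\<in>\<rat>. if Y \<omega> \<in> A q then ereal q else \<infinity>) \<le> b"
          using q by auto
      qed
    qed
    then show ?thesis by (simp add: g_def)
  qed
  ultimately show thesis by (rule that)
qed

lemma borel_measurable_uncurry_compose:
  fixes F :: "'x::second_countable_topology \<Rightarrow> 't::second_countable_topology \<Rightarrow> real"
  assumes "(\<lambda>(x, t). F x t) \<in> borel_measurable borel"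
    and "X \<in> M \<rightarrow>\<^sub>M borel" and "k \<in> M \<rightarrow>\<^sub>M borel"
  shows "(\<lambda>\<omega>. F (X \<omega>) (k \<omega>)) \<in> borel_measurable M"
proof -
  have "(\<lambda>\<omega>. (X \<omega>, k \<omega>)) \<in> M \<rightarrow>\<^sub>M borel"
    using assms(2,3) by (simp add: borel_prod[symmetric])
  from measurable_compose[OF this assms(1)] show ?thesis by simp
qed

lemma obtain_dense_sequence:
  obtains q :: "nat \<Rightarrow> 'a::{metric_space, second_countable_topology}"
  where "\<And>t r. 0 < r \<Longrightarrow> \<exists>j. dist (q j) t < r"
proof -
  obtain D :: "'a set" where D: "countable D" "\<And>U. open U \<Longrightarrow> U \<noteq> {} \<Longrightarrow> \<exists>d\<in>D. d \<in> U"
    using countable_dense_setE by blast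
  have "\<exists>j. dist (from_nat_into D j) t < r" if r: "0 < r" for t :: 'a and r
  proof -
    obtain d where d: "d \<in> D" "d \<in> ball t r" using D(2)[of "ball t r"] r by auto
    then have "from_nat_into D (to_nat_on D d) = d" using D(1) by simp
    with d(2) show ?thesis by (metis dist_commute mem_ball)
  qed
  then show thesis by (rule that)
qed

lemma measurable_nearest_index:
  fixes q :: "nat \<Rightarrow> 'a::{metric_space, second_countable_topology}"
  assumes dense: "\<And>t r. 0 < r \<Longrightarrow> \<exists>j. dist (q j) t < r"
    and h: "h \<in> borel_measurable N" and r: "0 < r"
  obtains J where "J \<in> N \<rightarrow>\<^sub>M count_space UNIV" "\<And>y. dist (q (J y)) (h y) < r"
proof
  show "(\<lambda>y. LEAST j. dist (q j) (h y) < r) \<in> N \<rightarrow>\<^sub>M count_space UNIV"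
    using h by measurable
  show "dist (q (LEAST j. dist (q j) (h y) < r)) (h y) < r" for y
    by (rule LeastI_ex) (use dense[OF r] in auto)
qed

lemma set_integrable_if_integrable:
  fixes f :: "'a \<Rightarrow> 'b::{banach, second_countable_topology}"
  shows "A \<in> sets M \<Longrightarrow> integrable M f \<Longrightarrow> set_integrable M A f"
  unfolding set_integrable_def by (rule integrable_mult_indicator)

lemma sigma_sets_preimage_compose_subset:
  assumes X: "X \<in> M \<rightarrow>\<^sub>M N" and f: "f \<in> N \<rightarrow>\<^sub>M K"
  shows "sigma_sets (space M) {(f \<circ> X) -` A \<inter> space M | A. A \<in> sets K}
    \<subseteq> sigma_sets (space M) {X -` A \<inter> space M | A. A \<in> sets N}"
proof (rule sigma_sets_mono', safe)
  fix A assume "A \<in> sets K"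
  then have "f -` A \<inter> space N \<in> sets N" using f by measurable
  moreover have "(f \<circ> X) -` A \<inter> space M = X -` (f -` A \<inter> space N) \<inter> space M"
    using measurable_space[OF X] by auto
  ultimately show "\<exists>B. (f \<circ> X) -` A \<inter> space M = X -` B \<inter> space M \<and> B \<in> sets N" by blast
qed

lemma (in prob_space) indep_set_integral_mult:
  fixes f :: "'b \<Rightarrow> real" and g :: "'c \<Rightarrow> real"
  assumes X: "X \<in> M \<rightarrow>\<^sub>M N" and Y: "Y \<in> M \<rightarrow>\<^sub>M K"
    and indep: "indep_set (sigma_sets (space M) {X -` A \<inter> space M | A. A \<in> sets N})
                          (sigma_sets (space M) {Y -` A \<inter> space M | A. A \<in> sets K})"
    and f: "f \<in> borel_measurable N" "integrable M (\<lambda>\<omega>. f (X \<omega>))"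
    and g: "g \<in> borel_measurable K" "integrable M (\<lambda>\<omega>. g (Y \<omega>))"
  shows "(\<integral>\<omega>. f (X \<omega>) * g (Y \<omega>) \<partial>M) = (\<integral>\<omega>. f (X \<omega>) \<partial>M) * (\<integral>\<omega>. g (Y \<omega>) \<partial>M)"
proof -
  have "indep_set (sigma_sets (space M) {(f \<circ> X) -` A \<inter> space M | A. A \<in> sets borel})
                  (sigma_sets (space M) {(g \<circ> Y) -` A \<inter> space M | A. A \<in> sets borel})"
    using indep unfolding indep_set_def
    by (rule indep_sets_mono_sets)
      (use sigma_sets_preimage_compose_subset[OF X f(1)] sigma_sets_preimage_compose_subset[OF Y g(1)]
        in \<open>auto split: bool.splits\<close>)
  then have "indep_var borel (f \<circ> X) borel (g \<circ> Y)"
    using X Y f(1) g(1) by (simp add: indep_var_eq)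
  from indep_var_lebesgue_integral[OF this] f(2) g(2) show ?thesis
    by (simp add: comp_def)
qed

lemma (in finite_measure) abs_set_integral_UN_le:
  fixes f :: "'a \<Rightarrow> real"
  assumes A: "\<And>i::nat. A i \<in> sets M" and disj: "disjoint_family A"
    and f: "set_integrable M (\<Union>i. A i) f"
    and bound: "\<And>i. \<bar>\<integral>x\<in>A i. f x \<partial>M\<bar> \<le> c * measure M (A i)"
  shows "\<bar>\<integral>x\<in>(\<Union>i. A i). f x \<partial>M\<bar> \<le> c * measure M (\<Union>i. A i)"
proof -
  let ?a = "\<lambda>i. \<integral>x\<in>A i. f x \<partial>M"
  have sums: "(\<lambda>i. c * measure M (A i)) sums (c * measure M (\<Union>i. A i))"
    using finite_measure_UNION[of A] A disj by (intro sums_mult) auto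
  have summable: "summable (\<lambda>i. \<bar>?a i\<bar>)"
    using bound by (intro summable_rabs_comparison_test[OF _ sums_summable[OF sums]]) auto
  have "(\<integral>x\<in>(\<Union>i. A i). f x \<partial>M) = (\<Sum>i. ?a i)"
    using disj f by (intro lebesgue_integral_countable_add A) (auto simp: disjoint_family_on_def)
  then have "\<bar>\<integral>x\<in>(\<Union>i. A i). f x \<partial>M\<bar> \<le> (\<Sum>i. \<bar>?a i\<bar>)"
    using summable_rabs[OF summable] by simp
  also have "\<dots> \<le> (\<Sum>i. c * measure M (A i))"
    by (rule suminf_le[OF bound summable sums_summable[OF sums]])
  also have "\<dots> = c * measure M (\<Union>i. A i)"
    using sums by (rule sums_unique[symmetric])
  finally show ?thesis .
qed

lemma (in finite_measure) AE_notin_of_set_integral_le: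
  fixes f :: "'a \<Rightarrow> real"
  assumes A: "A \<in> sets M" and f: "set_integrable M A f"
    and gt: "\<And>x. x \<in> A \<Longrightarrow> c < f x" and le: "(\<integral>x\<in>A. f x \<partial>M) \<le> c * measure M A"
  shows "AE x in M. x \<notin> A"
proof (rule AE_not_in, rule ccontr)
  assume "A \<notin> null_sets M"
  have "(\<integral>x. indicator A x * c \<partial>M) < (\<integral>x. indicator A x * f x \<partial>M)"
  proof (intro integral_less_AE[where A=A] A)
    show "emeasure M A \<noteq> 0" using A \<open>A \<notin> null_sets M\<close> by auto
    show "integrable M (\<lambda>x. indicator A x * c)"
      using integrable_mult_indicator[OF A integrable_const[of c]] by simp
    show "integrable M (\<lambda>x. indicator A x * f x)"
      using f by (simp add: set_integrable_def)
    show "AE x in M. x \<in> A \<longrightarrow> indicator A x * c \<noteq> indicator A x * f x"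
      using gt by (auto intro!: AE_I2 dest: less_imp_neq)
    show "AE x in M. indicator A x * c \<le> indicator A x * f x"
      using gt by (auto intro!: AE_I2 less_imp_le simp: indicator_def)
  qed
  with A le show False by (simp add: set_lebesgue_integral_def mult.commute)
qed

lemma (in finite_measure) AE_abs_le_of_local_set_integral_le:
  fixes D :: "'a \<Rightarrow> real"
  assumes sub: "subalgebra M N" and D: "D \<in> borel_measurable N" "integrable M D"
    and S: "\<And>j::nat. S j \<in> sets N" and cover: "space M \<subseteq> (\<Union>j. S j)"
    and bound: "\<And>j A. A \<in> sets N \<Longrightarrow> A \<subseteq> S j \<Longrightarrow> \<bar>\<integral>x\<in>A. D x \<partial>M\<bar> \<le> c * measure M A"
  shows "AE x in M. \<bar>D x\<bar> \<le> c"
proof -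
  have space_N: "space N = space M" and sets_N: "sets N \<subseteq> sets M"
    using sub by (auto simp: subalgebra_def)
  have exceed: "AE x in M. x \<notin> {x\<in>space M. c < s * D x} \<inter> S j" if s: "\<bar>s\<bar> = 1" for s j
  proof (rule AE_notin_of_set_integral_le)
    let ?A = "{x\<in>space M. c < s * D x} \<inter> S j"
    have "?A \<in> sets N"
      using D(1) S[of j] unfolding space_N[symmetric] by measurable
    then show "?A \<in> sets M" using sets_N by blast
    then show "set_integrable M ?A (\<lambda>x. s * D x)"
      using D(2) by (intro set_integrable_if_integrable) auto
    have "(\<integral>x\<in>?A. s * D x \<partial>M) \<le> \<bar>\<integral>x\<in>?A. D x \<partial>M\<bar>"
      using s by (auto simp: abs_if split: if_splits)
    also have "\<dots> \<le> c * measure M ?A"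
      using \<open>?A \<in> sets N\<close> by (intro bound[of _ j]) auto
    finally show "(\<integral>x\<in>?A. s * D x \<partial>M) \<le> c * measure M ?A" .
  qed auto
  have "AE x in M. \<forall>j. x \<notin> {x\<in>space M. c < D x} \<inter> S j \<and> x \<notin> {x\<in>space M. c < - D x} \<inter> S j"
    unfolding AE_all_countable using exceed[of 1] exceed[of "-1"] by auto
  with AE_space show ?thesis
  proof eventually_elim
    case (elim x)
    then obtain j where "x \<in> S j" using cover by blast
    with elim show ?case by (auto simp: abs_le_iff)
  qed
qed

lemma AE_le_of_esssup_le: "esssup M f \<le> c \<Longrightarrow> AE x in M. f x \<le> c"
  using esssup_AE[of f M] by (auto elim: eventually_mono intro: order_trans)

locale bounded_cond_deviation = prob_space M
  for M :: "'w measure" and F :: "'x::polish_space \<Rightarrow> 't::polish_space \<Rightarrow> real"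
    and X :: "'w \<Rightarrow> 'x" and Y :: "'w \<Rightarrow> 'y::polish_space" and C :: real +
  assumes F_measurable: "(\<lambda>(x, t). F x t) \<in> borel_measurable borel"
    and X_measurable: "X \<in> M \<rightarrow>\<^sub>M borel"
    and Y_measurable: "Y \<in> M \<rightarrow>\<^sub>M borel"
    and integrable_F: "\<And>t. integrable M (\<lambda>\<omega>. F (X \<omega>) t)"
    and cond_exp_deviation: "\<And>t. AE \<omega> in M.
          \<bar>real_cond_exp M (vimage_algebra (space M) Y borel) (\<lambda>\<omega>. F (X \<omega>) t) \<omega> - (\<integral>\<omega>. F (X \<omega>) t \<partial>M)\<bar> \<le> C"
begin

abbreviation sigma_Y :: "'w measure" where
  "sigma_Y \<equiv> vimage_algebra (space M) Y borel"

lemma subalgebra_sigma_Y: "subalgebra M sigma_Y"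
  unfolding subalgebra_def using sets_image_in_sets[OF refl Y_measurable] by simp

sublocale Y: finite_measure_subalgebra M sigma_Y
  by unfold_locales (rule subalgebra_sigma_Y)

lemma sets_sigma_Y: "sets sigma_Y = {Y -` B \<inter> space M | B. B \<in> sets borel}"
  using measurable_space[OF Y_measurable] by (intro sets_vimage_algebra2) auto

lemma C_nonneg: "0 \<le> C"
proof -
  have "AE \<omega> in M. 0 \<le> C"
    using cond_exp_deviation[of undefined] by eventually_elim (rule order_trans[OF abs_ge_zero])
  then show ?thesis by simp
qed

lemma borel_measurable_F: "(\<lambda>x. F x t) \<in> borel_measurable borel"
  using borel_measurable_uncurry_compose[OF F_measurable, of "\<lambda>x. x" borel "\<lambda>_. t"] by simp

lemma exists_bounded_version:
  "\<exists>g. \<forall>t. g t \<in> borel_measurable borel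
      \<and> (AE \<omega> in M. g t (Y \<omega>) = real_cond_exp M sigma_Y (\<lambda>\<omega>. F (X \<omega>) t) \<omega>)
      \<and> (\<forall>y. \<bar>g t y - (\<integral>\<omega>. F (X \<omega>) t \<partial>M)\<bar> \<le> C)"
proof -
  have "\<exists>k \<in> borel_measurable borel. \<forall>\<omega>\<in>space M.
      k (Y \<omega>) = real_cond_exp M sigma_Y (\<lambda>\<omega>. F (X \<omega>) t) \<omega>" for t
    using borel_measurable_vimage_algebra_factor[OF Y_measurable borel_measurable_cond_exp] by metis
  then obtain k where k: "\<And>t. k t \<in> borel_measurable borel"
    "\<And>t \<omega>. \<omega> \<in> space M \<Longrightarrow> k t (Y \<omega>) = real_cond_exp M sigma_Y (\<lambda>\<omega>. F (X \<omega>) t) \<omega>"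
    by metis
  define m where "m t = (\<integral>\<omega>. F (X \<omega>) t \<partial>M)" for t
  \<comment> \<open>Clamping \<open>k t\<close> to \<open>[m t - C, m t + C]\<close> changes it only on a null set.\<close>
  define g where "g t y = max (m t - C) (min (m t + C) (k t y))" for t y
  show ?thesis
  proof (intro exI allI conjI)
    fix t
    show "g t \<in> borel_measurable borel"
      unfolding g_def using k(1)[of t] by measurable
    show "AE \<omega> in M. g t (Y \<omega>) = real_cond_exp M sigma_Y (\<lambda>\<omega>. F (X \<omega>) t) \<omega>"
      using cond_exp_deviation[of t] AE_space
      by eventually_elim (auto simp: g_def m_def k(2) abs_le_iff max_def min_def)
    show "\<bar>g t y - (\<integral>\<omega>. F (X \<omega>) t \<partial>M)\<bar> \<le> C" for y
      using C_nonneg by (auto simp: g_def m_def)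
  qed
qed

end

locale independent_copy = bounded_cond_deviation M F X Y C
  for M :: "'w measure" and F :: "'x::polish_space \<Rightarrow> 't::polish_space \<Rightarrow> real"
    and X :: "'w \<Rightarrow> 'x" and Y :: "'w \<Rightarrow> 'y::polish_space" and C :: real +
  fixes Xt :: "'w \<Rightarrow> 'x" and \<epsilon> :: real and L :: "'t \<Rightarrow> 'x \<Rightarrow> real"
  assumes Xt_measurable: "Xt \<in> M \<rightarrow>\<^sub>M borel"
    and Xt_distr: "distr M borel Xt = distr M borel X"
    and indep_Xt_Y: "prob_space.indep_set M
          (sigma_sets (space M) {Xt -` A \<inter> space M | A. A \<in> sets borel})
          (sigma_sets (space M) {Y -` A \<inter> space M | A. A \<in> sets borel})"
    and F_continuous: "\<And>x. continuous_on UNIV (F x)"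
    and eps_pos: "0 < \<epsilon>"
    and L_measurable: "\<And>t. L t \<in> borel_measurable borel"
    and F_le_L: "\<And>t t' x. t' \<in> ball t \<epsilon> \<Longrightarrow> \<bar>F x t'\<bar> \<le> L t x"
    and integrable_L: "\<And>t. integrable M (\<lambda>\<omega>. L t (X \<omega>))"
begin

lemma
  fixes f :: "'x \<Rightarrow> real"
  assumes "f \<in> borel_measurable borel"
  shows integrable_copy_iff: "integrable M (\<lambda>\<omega>. f (Xt \<omega>)) \<longleftrightarrow> integrable M (\<lambda>\<omega>. f (X \<omega>))"
    and integral_copy: "(\<integral>\<omega>. f (Xt \<omega>) \<partial>M) = (\<integral>\<omega>. f (X \<omega>) \<partial>M)"
  using integrable_distr_eq[OF Xt_measurable assms] integrable_distr_eq[OF X_measurable assms]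
    integral_distr[OF Xt_measurable assms] integral_distr[OF X_measurable assms]
  by (simp_all add: Xt_distr)

lemma set_integral_copy_Y_event:
  fixes f :: "'x \<Rightarrow> real"
  assumes f: "f \<in> borel_measurable borel" "integrable M (\<lambda>\<omega>. f (X \<omega>))" and B: "B \<in> sets borel"
  shows "(\<integral>\<omega>\<in>Y -` B \<inter> space M. f (Xt \<omega>) \<partial>M) = prob (Y -` B \<inter> space M) * (\<integral>\<omega>. f (X \<omega>) \<partial>M)"
proof -
  have "(\<integral>\<omega>. f (Xt \<omega>) * indicator B (Y \<omega>) \<partial>M)
      = (\<integral>\<omega>. f (Xt \<omega>) \<partial>M) * (\<integral>\<omega>. indicator B (Y \<omega>) \<partial>M)"
  proof (rule indep_set_integral_mult[OF Xt_measurable Y_measurable indep_Xt_Y f(1)])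
    show "integrable M (\<lambda>\<omega>. f (Xt \<omega>))" using f by (simp add: integrable_copy_iff)
    show "integrable M (\<lambda>\<omega>. indicator B (Y \<omega>) :: real)"
      using B Y_measurable by (intro integrable_const_bound[where B=1]) (auto simp: indicator_def)
  qed (use B in auto)
  moreover have "(\<integral>\<omega>\<in>Y -` B \<inter> space M. f (Xt \<omega>) \<partial>M) = (\<integral>\<omega>. f (Xt \<omega>) * indicator B (Y \<omega>) \<partial>M)"
    by (auto simp: set_lebesgue_integral_def indicator_def intro!: Bochner_Integration.integral_cong)
  moreover have "(\<integral>\<omega>. indicator B (Y \<omega>) \<partial>M) = prob (Y -` B \<inter> space M)"
  proof -
    have "(\<integral>\<omega>. indicator B (Y \<omega>) \<partial>M) = (\<integral>\<omega>. indicator (Y -` B \<inter> space M) \<omega> \<partial>M :: real)"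
      by (rule Bochner_Integration.integral_cong) (auto simp: indicator_def)
    then show ?thesis by (simp add: Int_absorb2)
  qed
  ultimately show ?thesis
    using f by (simp add: integral_copy)
qed

definition defect :: "('w \<Rightarrow> 't) \<Rightarrow> 'w \<Rightarrow> real" where
  "defect k \<omega> = F (X \<omega>) (k \<omega>) - F (Xt \<omega>) (k \<omega>)"

lemma defect_const_bound:
  assumes B: "B \<in> sets borel"
  shows "\<bar>\<integral>\<omega>\<in>Y -` B \<inter> space M. defect (\<lambda>_. t) \<omega> \<partial>M\<bar> \<le> C * prob (Y -` B \<inter> space M)"
proof -
  let ?A = "Y -` B \<inter> space M"
  let ?E = "real_cond_exp M sigma_Y (\<lambda>\<omega>. F (X \<omega>) t)"
  let ?m = "\<integral>\<omega>. F (X \<omega>) t \<partial>M"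
  have A_Y: "?A \<in> sets sigma_Y" using B by (auto simp: sets_sigma_Y)
  then have A: "?A \<in> sets M" using Y.subalg by (auto simp: subalgebra_def)
  have integrable_Xt: "integrable M (\<lambda>\<omega>. F (Xt \<omega>) t)"
    using integrable_copy_iff[OF borel_measurable_F] integrable_F by simp
  have integrable_E: "integrable M (\<lambda>\<omega>. ?E \<omega> - ?m)"
    using Y.real_cond_exp_int(1)[OF integrable_F] by simp
  have "(\<integral>\<omega>\<in>?A. defect (\<lambda>_. t) \<omega> \<partial>M) = (\<integral>\<omega>\<in>?A. F (X \<omega>) t \<partial>M) - (\<integral>\<omega>\<in>?A. F (Xt \<omega>) t \<partial>M)"
    unfolding defect_def using A integrable_F integrable_Xt
    by (intro set_integral_diff set_integrable_if_integrable)
  also have "(\<integral>\<omega>\<in>?A. F (X \<omega>) t \<partial>M) = (\<integral>\<omega>\<in>?A. ?E \<omega> \<partial>M)"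
    by (rule Y.real_cond_exp_intA[OF integrable_F A_Y])
  also have "(\<integral>\<omega>\<in>?A. F (Xt \<omega>) t \<partial>M) = (\<integral>\<omega>\<in>?A. ?m \<partial>M)"
    using set_integral_copy_Y_event[OF borel_measurable_F integrable_F B] A
    by (simp add: set_integral_const[OF A])
  also have "(\<integral>\<omega>\<in>?A. ?E \<omega> \<partial>M) - (\<integral>\<omega>\<in>?A. ?m \<partial>M) = (\<integral>\<omega>\<in>?A. ?E \<omega> - ?m \<partial>M)"
    using A integrable_F by (intro set_integral_diff(2)[symmetric] set_integrable_if_integrable) auto
  also have "\<bar>\<dots>\<bar> \<le> (\<integral>\<omega>\<in>?A. \<bar>?E \<omega> - ?m\<bar> \<partial>M)"
    using set_integral_norm_bound[OF set_integrable_if_integrable[OF A integrable_E]] by simp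
  also have "\<dots> \<le> (\<integral>\<omega>\<in>?A. C \<partial>M)"
    using A integrable_E cond_exp_deviation[of t]
    by (intro set_integral_mono_AE set_integrable_if_integrable) auto
  also have "\<dots> = C * prob ?A"
    by (simp add: set_integral_const[OF A])
  finally show ?thesis .
qed

lemma borel_measurable_defect:
  assumes k: "k \<in> M \<rightarrow>\<^sub>M borel"
  shows "defect k \<in> borel_measurable M"
  unfolding defect_def
  using borel_measurable_uncurry_compose[OF F_measurable X_measurable k]
    borel_measurable_uncurry_compose[OF F_measurable Xt_measurable k]
  by measurable

lemma defect_dominated:
  assumes "k \<omega> \<in> ball s \<epsilon>"
  shows "\<bar>defect k \<omega>\<bar> \<le> L s (X \<omega>) + L s (Xt \<omega>)"
  using F_le_L[OF assms, of "X \<omega>"] F_le_L[OF assms, of "Xt \<omega>"] abs_triangle_ineq4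
  unfolding defect_def by (smt (verit))

lemma L_nonneg: "0 \<le> L t x"
  using F_le_L[of t t x] eps_pos by (auto intro: order_trans[OF abs_ge_zero])

lemma integrable_dominating: "integrable M (\<lambda>\<omega>. L s (X \<omega>) + L s (Xt \<omega>))"
  using integrable_L integrable_copy_iff[OF L_measurable] by simp

lemma set_integrable_defect:
  assumes k: "k \<in> M \<rightarrow>\<^sub>M borel" and A: "A \<in> sets M" and near: "\<And>\<omega>. \<omega> \<in> A \<Longrightarrow> k \<omega> \<in> ball s \<epsilon>"
  shows "set_integrable M A (defect k)"
proof (rule set_integrable_bound[OF set_integrable_if_integrable[OF A integrable_dominating]])
  show "set_borel_measurable M A (defect k)"
    using A borel_measurable_defect[OF k] by (simp add: set_borel_measurable_def)
  show "AE \<omega> in M. \<omega> \<in> A \<longrightarrow> norm (defect k \<omega>) \<le> norm (L s (X \<omega>) + L s (Xt \<omega>))"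
    using defect_dominated near by (auto intro!: AE_I2 order_trans[OF _ abs_ge_self])
qed

lemma defect_countable_bound:
  fixes J :: "'y \<Rightarrow> nat"
  assumes J: "J \<in> borel \<rightarrow>\<^sub>M count_space UNIV" and B: "B \<in> sets borel"
    and near: "\<And>y. y \<in> B \<Longrightarrow> q (J y) \<in> ball s \<epsilon>"
  shows "\<bar>\<integral>\<omega>\<in>Y -` B \<inter> space M. defect (\<lambda>\<omega>. q (J (Y \<omega>))) \<omega> \<partial>M\<bar> \<le> C * prob (Y -` B \<inter> space M)"
proof -
  define A where "A j = Y -` (B \<inter> J -` {j}) \<inter> space M" for j
  have B_j: "B \<inter> J -` {j} \<in> sets borel" for j
    using measurable_sets[OF J, of "{j}"] B by (auto simp: Int_absorb2)
  then have A: "A j \<in> sets M" for j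
    unfolding A_def using Y_measurable by measurable
  have UN: "(\<Union>j. A j) = Y -` B \<inter> space M"
    by (auto simp: A_def)
  have "\<bar>\<integral>\<omega>\<in>(\<Union>j. A j). defect (\<lambda>\<omega>. q (J (Y \<omega>))) \<omega> \<partial>M\<bar> \<le> C * prob (\<Union>j. A j)"
  proof (rule abs_set_integral_UN_le)
    show "disjoint_family A" by (auto simp: disjoint_family_on_def A_def)
    show "set_integrable M (\<Union>j. A j) (defect (\<lambda>\<omega>. q (J (Y \<omega>))))"
      unfolding UN using J Y_measurable B near by (intro set_integrable_defect) auto
    fix j
    have "(\<integral>\<omega>\<in>A j. defect (\<lambda>\<omega>. q (J (Y \<omega>))) \<omega> \<partial>M) = (\<integral>\<omega>\<in>A j. defect (\<lambda>_. q j) \<omega> \<partial>M)"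
      using A by (intro set_lebesgue_integral_cong) (auto simp: A_def defect_def)
    then show "\<bar>\<integral>\<omega>\<in>A j. defect (\<lambda>\<omega>. q (J (Y \<omega>))) \<omega> \<partial>M\<bar> \<le> C * prob (A j)"
      using defect_const_bound[OF B_j, where t = "q j"] by (simp add: A_def)
  qed (fact A)
  then show ?thesis unfolding UN .
qed

lemma abs_set_integral_defect_limit_le:
  assumes A: "A \<in> sets M" and k: "\<And>n. k n \<in> M \<rightarrow>\<^sub>M borel" "k' \<in> M \<rightarrow>\<^sub>M borel"
    and lim: "\<And>\<omega>. (\<lambda>n. k n \<omega>) \<longlonglongrightarrow> k' \<omega>"
    and near: "\<And>n \<omega>. \<omega> \<in> A \<Longrightarrow> k n \<omega> \<in> ball s \<epsilon>"
    and bound: "\<And>n. \<bar>\<integral>\<omega>\<in>A. defect (k n) \<omega> \<partial>M\<bar> \<le> c"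
  shows "\<bar>\<integral>\<omega>\<in>A. defect k' \<omega> \<partial>M\<bar> \<le> c"
proof -
  have "(\<lambda>n. \<integral>\<omega>. indicator A \<omega> * defect (k n) \<omega> \<partial>M) \<longlonglongrightarrow> (\<integral>\<omega>. indicator A \<omega> * defect k' \<omega> \<partial>M)"
  proof (rule integral_dominated_convergence[OF _ _ integrable_dominating[of s]])
    show "(\<lambda>\<omega>. indicator A \<omega> * defect k' \<omega>) \<in> borel_measurable M"
      using A borel_measurable_defect[OF k(2)] by measurable
    show "(\<lambda>\<omega>. indicator A \<omega> * defect (k n) \<omega>) \<in> borel_measurable M" for n
      using A borel_measurable_defect[OF k(1)] by measurable
    show "AE \<omega> in M. (\<lambda>n. indicator A \<omega> * defect (k n) \<omega>) \<longlonglongrightarrow> indicator A \<omega> * defect k' \<omega>"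
      unfolding defect_def
      by (intro AE_I2 tendsto_intros continuous_on_tendsto_compose[OF F_continuous lim]) simp_all
    show "AE \<omega> in M. norm (indicator A \<omega> * defect (k n) \<omega>) \<le> L s (X \<omega>) + L s (Xt \<omega>)" for n
    proof (rule AE_I2)
      fix \<omega> show "norm (indicator A \<omega> * defect (k n) \<omega>) \<le> L s (X \<omega>) + L s (Xt \<omega>)"
        using defect_dominated[OF near] L_nonneg[of s] by (cases "\<omega> \<in> A") (auto intro: add_nonneg_nonneg)
    qed
  qed
  then have "(\<lambda>n. \<integral>\<omega>\<in>A. defect (k n) \<omega> \<partial>M) \<longlonglongrightarrow> (\<integral>\<omega>\<in>A. defect k' \<omega> \<partial>M)"
    by (simp add: set_lebesgue_integral_def)
  with bound show ?thesis
    by (intro LIMSEQ_le_const2[OF tendsto_rabs]) auto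
qed

lemma defect_local_bound:
  assumes h: "h \<in> borel_measurable borel" and B: "B \<in> sets borel"
    and near: "\<And>y. y \<in> B \<Longrightarrow> h y \<in> ball s (\<epsilon> / 2)"
  shows "\<bar>\<integral>\<omega>\<in>Y -` B \<inter> space M. defect (\<lambda>\<omega>. h (Y \<omega>)) \<omega> \<partial>M\<bar> \<le> C * prob (Y -` B \<inter> space M)"
proof -
  obtain q :: "nat \<Rightarrow> 't" where dense: "\<And>t r. 0 < r \<Longrightarrow> \<exists>j. dist (q j) t < r"
    using obtain_dense_sequence by blast
  define r where "r n = \<epsilon> / 2 / Suc n" for n
  have r_pos: "0 < r n" and r_le: "r n \<le> \<epsilon> / 2" for n
    using eps_pos by (simp_all add: r_def field_simps)
  have "\<exists>J. J \<in> borel \<rightarrow>\<^sub>M count_space UNIV \<and> (\<forall>y. dist (q (J y)) (h y) < r n)" for n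
    using measurable_nearest_index[OF dense h r_pos] by metis
  then obtain J where J: "\<And>n. J n \<in> borel \<rightarrow>\<^sub>M count_space UNIV"
    and J_near: "\<And>n y. dist (q (J n y)) (h y) < r n"
    by metis
  have near_J: "q (J n y) \<in> ball s \<epsilon>" if "y \<in> B" for n y
  proof -
    have "dist s (q (J n y)) \<le> dist s (h y) + dist (q (J n y)) (h y)"
      by (rule dist_triangle2)
    also have "\<dots> < \<epsilon> / 2 + \<epsilon> / 2"
      using near[OF that] J_near[of n y] r_le[of n] by (intro add_strict_mono) auto
    finally show ?thesis by simp
  qed
  have J_lim: "(\<lambda>n. q (J n y)) \<longlonglongrightarrow> h y" for y
  proof (rule tendsto_dist_iff[THEN iffD2], rule Lim_null_comparison)
    show "\<forall>\<^sub>F n in sequentially. norm (dist (q (J n y)) (h y)) \<le> r n"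
      using J_near by (intro always_eventually allI) (simp add: less_imp_le)
    show "r \<longlonglongrightarrow> 0"
      unfolding r_def using LIMSEQ_Suc[OF lim_const_over_n[of "\<epsilon> / 2"]] by simp
  qed
  show ?thesis
  proof (rule abs_set_integral_defect_limit_le[where k = "\<lambda>n \<omega>. q (J n (Y \<omega>))"])
    show "Y -` B \<inter> space M \<in> sets M" using B Y_measurable by measurable
    show "(\<lambda>\<omega>. q (J n (Y \<omega>))) \<in> M \<rightarrow>\<^sub>M borel" for n using J Y_measurable by measurable
    show "(\<lambda>\<omega>. h (Y \<omega>)) \<in> M \<rightarrow>\<^sub>M borel" using h Y_measurable by measurable
    show "\<bar>\<integral>\<omega>\<in>Y -` B \<inter> space M. defect (\<lambda>\<omega>. q (J n (Y \<omega>))) \<omega> \<partial>M\<bar> \<le> C * prob (Y -` B \<inter> space M)" for n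
      using J B near_J by (rule defect_countable_bound)
  qed (use J_lim near_J in auto)
qed

lemma cond_exp_copy_abs_le:
  assumes h: "h \<in> borel_measurable borel"
    and integrable_X: "integrable M (\<lambda>\<omega>. F (X \<omega>) (h (Y \<omega>)))"
    and integrable_Xt: "integrable M (\<lambda>\<omega>. F (Xt \<omega>) (h (Y \<omega>)))"
  shows "AE \<omega> in M. \<bar>real_cond_exp M sigma_Y (\<lambda>\<omega>. F (X \<omega>) (h (Y \<omega>))) \<omega>
      - real_cond_exp M sigma_Y (\<lambda>\<omega>. F (Xt \<omega>) (h (Y \<omega>))) \<omega>\<bar> \<le> C"
proof -
  let ?E = "real_cond_exp M sigma_Y (\<lambda>\<omega>. F (X \<omega>) (h (Y \<omega>)))"
  let ?Et = "real_cond_exp M sigma_Y (\<lambda>\<omega>. F (Xt \<omega>) (h (Y \<omega>)))"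
  obtain q :: "nat \<Rightarrow> 't" where dense: "\<And>t r. 0 < r \<Longrightarrow> \<exists>j. dist (q j) t < r"
    using obtain_dense_sequence by blast
  define S where "S j = Y -` (h -` ball (q j) (\<epsilon> / 2)) \<inter> space M" for j
  show ?thesis
  proof (rule AE_abs_le_of_local_set_integral_le[OF Y.subalg])
    show "(\<lambda>\<omega>. ?E \<omega> - ?Et \<omega>) \<in> borel_measurable sigma_Y" by measurable
    show "integrable M (\<lambda>\<omega>. ?E \<omega> - ?Et \<omega>)"
      using Y.real_cond_exp_int(1)[OF integrable_X] Y.real_cond_exp_int(1)[OF integrable_Xt] by simp
    show "S j \<in> sets sigma_Y" for j
      using measurable_sets[OF h borel_open[OF open_ball]] unfolding S_def sets_sigma_Y by auto
    show "space M \<subseteq> (\<Union>j. S j)"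
      using dense[of "\<epsilon> / 2"] eps_pos by (fastforce simp: S_def)
  next
    fix j A assume A: "A \<in> sets sigma_Y" "A \<subseteq> S j"
    then obtain B where B: "B \<in> sets borel" "A = Y -` B \<inter> space M"
      by (auto simp: sets_sigma_Y)
    let ?B = "B \<inter> h -` ball (q j) (\<epsilon> / 2)"
    have A_eq: "A = Y -` ?B \<inter> space M"
      using A(2) B(2) by (auto simp: S_def)
    have B': "?B \<in> sets borel"
      using B(1) measurable_sets[OF h borel_open[OF open_ball]] by auto
    have A_M: "A \<in> sets M" using A(1) Y.subalg by (auto simp: subalgebra_def)
    have "(\<integral>\<omega>\<in>A. ?E \<omega> - ?Et \<omega> \<partial>M) = (\<integral>\<omega>\<in>A. ?E \<omega> \<partial>M) - (\<integral>\<omega>\<in>A. ?Et \<omega> \<partial>M)"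
      using A_M integrable_X integrable_Xt
      by (intro set_integral_diff set_integrable_if_integrable Y.real_cond_exp_int(1))
    also have "\<dots> = (\<integral>\<omega>\<in>A. F (X \<omega>) (h (Y \<omega>)) \<partial>M) - (\<integral>\<omega>\<in>A. F (Xt \<omega>) (h (Y \<omega>)) \<partial>M)"
      using Y.real_cond_exp_intA[OF integrable_X A(1)] Y.real_cond_exp_intA[OF integrable_Xt A(1)] by simp
    also have "\<dots> = (\<integral>\<omega>\<in>A. defect (\<lambda>\<omega>. h (Y \<omega>)) \<omega> \<partial>M)"
      unfolding defect_def using A_M integrable_X integrable_Xt
      by (intro set_integral_diff(2)[symmetric] set_integrable_if_integrable)
    finally show "\<bar>\<integral>\<omega>\<in>A. ?E \<omega> - ?Et \<omega> \<partial>M\<bar> \<le> C * measure M A"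
      unfolding A_eq using defect_local_bound[OF h B', of "q j"] by simp
  qed
qed

end


theorem lemmaA4:
  fixes M :: "'w measure"
    and F :: "'x::polish_space \<Rightarrow> 't::polish_space \<Rightarrow> real"
    and X :: "'w \<Rightarrow> 'x"
    and Y :: "'w \<Rightarrow> 'y::polish_space"
    and C :: real
  assumes "prob_space M"
    and F_meas: "(\<lambda>(x, t). F x t) \<in> borel_measurable borel"
    and X_meas: "X \<in> M \<rightarrow>\<^sub>M borel"
    and Y_meas: "Y \<in> M \<rightarrow>\<^sub>M borel"
    and integr: "\<And>t. integrable M (\<lambda>\<omega>. F (X \<omega>) t)"
    and bound: "\<And>t. esssup M (\<lambda>\<omega>. ereal \<bar>real_cond_exp M (vimage_algebra (space M) Y borel)
                        (\<lambda>\<omega>. F (X \<omega>) t) \<omega> - (\<integral>\<omega>. F (X \<omega>) t \<partial>M)\<bar>) \<le> ereal C"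
    and cont: "\<And>x. continuous_on UNIV (\<lambda>t. F x t)"
    and dom: "\<exists>\<epsilon>>0. \<forall>t. \<exists>L :: 'x \<Rightarrow> real. L \<in> borel_measurable borel \<and> (\<forall>x. L x \<ge> 0)
                 \<and> (\<forall>x. \<forall>t'\<in>ball t \<epsilon>. \<bar>F x t'\<bar> \<le> L x) \<and> integrable M (\<lambda>\<omega>. L (X \<omega>))"
  shows "(\<exists>g :: 't \<Rightarrow> 'y \<Rightarrow> real.
            (\<forall>t. g t \<in> borel_measurable borel \<and>
                 (AE \<omega> in M. g t (Y \<omega>) =
                    real_cond_exp M (vimage_algebra (space M) Y borel) (\<lambda>\<omega>. F (X \<omega>) t) \<omega>))
          \<and> (AE y in distr M borel Y. \<forall>t. \<bar>g t y - (\<integral>\<omega>. F (X \<omega>) t \<partial>M)\<bar> \<le> C))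
       \<and> (\<forall>(Xt :: 'w \<Rightarrow> 'x) (h :: 'y \<Rightarrow> 't).
            Xt \<in> M \<rightarrow>\<^sub>M borel \<and> distr M borel Xt = distr M borel X
            \<and> prob_space.indep_set M
                 (sigma_sets (space M) {Xt -` A \<inter> space M | A. A \<in> sets borel})
                 (sigma_sets (space M) {Y -` A \<inter> space M | A. A \<in> sets borel})
            \<and> h \<in> borel_measurable borel
            \<and> integrable M (\<lambda>\<omega>. F (X \<omega>) (h (Y \<omega>)))
            \<and> integrable M (\<lambda>\<omega>. F (Xt \<omega>) (h (Y \<omega>)))
            \<longrightarrow> esssup M (\<lambda>\<omega>. ereal \<bar>
                   real_cond_exp M (vimage_algebra (space M) Y borel) (\<lambda>\<omega>. F (X \<omega>) (h (Y \<omega>))) \<omega>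
                 - real_cond_exp M (vimage_algebra (space M) Y borel) (\<lambda>\<omega>. F (Xt \<omega>) (h (Y \<omega>))) \<omega>\<bar>)
                \<le> ereal C)"
proof -
  have deviation: "AE \<omega> in M. \<bar>real_cond_exp M (vimage_algebra (space M) Y borel) (\<lambda>\<omega>. F (X \<omega>) t) \<omega>
      - (\<integral>\<omega>. F (X \<omega>) t \<partial>M)\<bar> \<le> C" for t
    using AE_le_of_esssup_le[OF bound[of t]] by simp
  interpret bounded_cond_deviation M F X Y C
    by (intro bounded_cond_deviation.intro bounded_cond_deviation_axioms.intro assms deviation)
  obtain g where g: "\<And>t. g t \<in> borel_measurable borel"
    "\<And>t. AE \<omega> in M. g t (Y \<omega>) = real_cond_exp M sigma_Y (\<lambda>\<omega>. F (X \<omega>) t) \<omega>"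
    "\<And>t y. \<bar>g t y - (\<integral>\<omega>. F (X \<omega>) t \<partial>M)\<bar> \<le> C"
    using exists_bounded_version by metis
  obtain \<epsilon> L where local_domination: "0 < \<epsilon>" "\<And>t. L t \<in> borel_measurable borel"
    "\<And>t t' x. t' \<in> ball t \<epsilon> \<Longrightarrow> \<bar>F x t'\<bar> \<le> L t x" "\<And>t. integrable M (\<lambda>\<omega>. L t (X \<omega>))"
    using dom by metis
  have copy_bound: "esssup M (\<lambda>\<omega>. ereal \<bar>real_cond_exp M sigma_Y (\<lambda>\<omega>. F (X \<omega>) (h (Y \<omega>))) \<omega>
      - real_cond_exp M sigma_Y (\<lambda>\<omega>. F (Xt \<omega>) (h (Y \<omega>))) \<omega>\<bar>) \<le> ereal C"
    if "independent_copy M F X Y C Xt \<epsilon> L" "h \<in> borel_measurable borel"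
      "integrable M (\<lambda>\<omega>. F (X \<omega>) (h (Y \<omega>)))" "integrable M (\<lambda>\<omega>. F (Xt \<omega>) (h (Y \<omega>)))"
    for Xt h
    using independent_copy.cond_exp_copy_abs_le[OF that] by (intro esssup_I) auto
  show ?thesis
  proof (intro conjI exI[of _ g] allI impI)
    show "AE y in distr M borel Y. \<forall>t. \<bar>g t y - (\<integral>\<omega>. F (X \<omega>) t \<partial>M)\<bar> \<le> C"
      using g(3) by simp
  qed (use g copy_bound cont local_domination in
      \<open>auto simp: independent_copy_def independent_copy_axioms_def bounded_cond_deviation_axioms\<close>)
qed

end
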